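(* Let $D>0$, $t\ge0$, and for $\gamma\ge9$ let $r_2(\gamma)=\frac{\gamma-1-\sqrt{(\gamma-1)(\gamma-9)}}{4}$. Then $$\min_{\gamma\ge 9}\big(\gamma D+r_2(\gamma)\,t\big)=5D+t+2\sqrt{2D(2D+t)},$$ the minimum being attained (for $t>0$) at $\gamma=5+2\frac{4D+t}{\sqrt{2D(2D+t)}}$, where the corresponding optimal strategy of Theorem 3 is $x_i=\tfrac12\Big(\big(1+\tfrac{2D}{\sqrt{2D(2D+t)}}\big)^i-1\Big)t$. Moreover $5D+t+2\sqrt{2D(2D+t)}\le 9D+2t$, with equality if and only if $t=0$.
   Context: In the turn-cost search model without a lower bound on $D$, a strategy achieving worst-case total cost $\gamma D+\phi$ exists with minimal $\phi=r_2(\gamma)t$ for each $\gamma\ge9$ (Theorem 3), attained by $x_i=\tfrac12(r_2(\gamma)^i-1)t$. *)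

theory Defs
  imports Complex_Main
begin

definition r2 :: "real \<Rightarrow> real" where
  "r2 \<gamma> = (\<gamma> - 1 - sqrt ((\<gamma> - 1) * (\<gamma> - 9))) / 4"

end

theory Submission
  imports Defs
begin

text \<open>
  Write the turn-cost ratio as \<open>r2 \<gamma> = 1 + u\<close>. For \<open>\<gamma> \<ge> 9\<close> one has \<open>u > 0\<close> and
  \<open>\<gamma> = 5 + 2 (u + 1/u)\<close>; conversely every \<open>0 < u \<le> 1\<close> arises this way. In terms of \<open>u\<close>
  the worst-case cost becomes
    \<open>\<gamma> D + r2 \<gamma> t = 5 D + t + (2D/u + (2D + t) u)\<close>,
  and the AM-GM inequality bounds the bracket below by \<open>2 sqrt (2D (2D + t))\<close>, with
  equality at \<open>u = 2D / sqrt (2D (2D + t))\<close>; this value lies in \<open>(0, 1]\<close> and gives the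
  optimal \<open>\<gamma> = 5 + 2 (4D + t) / sqrt (2D (2D + t))\<close>. Comparing the minimum with the
  cost \<open>9 D + 2 t\<close> of \<open>\<gamma> = 9\<close> is again AM-GM, now for \<open>2D\<close> and \<open>2D + t\<close>, whose
  equality case is \<open>t = 0\<close>.
\<close>

lemma r2_reciprocal_sum_form:
  fixes \<gamma> :: real
  assumes "\<gamma> \<ge> 9"
  shows "r2 \<gamma> > 1" and "\<gamma> = 5 + 2 * ((r2 \<gamma> - 1) + 1 / (r2 \<gamma> - 1))"
proof -
  define q where "q = sqrt ((\<gamma> - 1) * (\<gamma> - 9))"
  have q_sq: "q\<^sup>2 = (\<gamma> - 1) * (\<gamma> - 9)"
    using assms by (simp add: q_def)
  have "q < \<gamma> - 5"
  proof (rule ccontr)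
    assume "\<not> q < \<gamma> - 5"
    hence "(\<gamma> - 5)\<^sup>2 \<le> q\<^sup>2"
      using assms by (intro power_mono) auto
    thus False
      using q_sq by (simp add: power2_eq_square algebra_simps)
  qed
  define u where "u = r2 \<gamma> - 1"
  have u_eq: "u = (\<gamma> - 5 - q) / 4"
    by (simp add: u_def r2_def q_def field_simps)
  have u_pos: "u > 0"
    using \<open>q < \<gamma> - 5\<close> by (simp add: u_eq)
  then show "r2 \<gamma> > 1"
    by (simp add: u_def)
  have "(\<gamma> - 5) * u = 2 * u\<^sup>2 + 2"
    using q_sq by (simp add: u_eq power2_eq_square field_simps)
  hence "\<gamma> = 5 + 2 * (u + 1 / u)"
    using u_pos by (simp add: field_simps power2_eq_square)
  thus "\<gamma> = 5 + 2 * ((r2 \<gamma> - 1) + 1 / (r2 \<gamma> - 1))"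
    by (simp add: u_def)
qed

lemma r2_at_reciprocal_sum:
  fixes u :: real
  assumes "0 < u" and "u \<le> 1"
  shows "r2 (5 + 2 * (u + 1 / u)) = 1 + u"
proof -
  define \<gamma> where "\<gamma> = 5 + 2 * (u + 1 / u)"
  have "u * u \<le> 1"
    using assms by (intro mult_le_one) auto
  hence "u \<le> 1 / u"
    using assms(1) by (simp add: le_divide_eq)
  have "(\<gamma> - 1) * (\<gamma> - 9) = (2 * (1 / u - u))\<^sup>2"
    using assms(1) by (simp add: \<gamma>_def field_simps power2_eq_square)
  hence "sqrt ((\<gamma> - 1) * (\<gamma> - 9)) = 2 * (1 / u - u)"
    using \<open>u \<le> 1 / u\<close> by simp
  hence "r2 \<gamma> = (\<gamma> - 1 - 2 * (1 / u - u)) / 4"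
    by (simp add: r2_def)
  also have "\<dots> = 1 + u"
    by (simp add: \<gamma>_def field_simps)
  finally show ?thesis
    by (simp add: \<gamma>_def)
qed

lemma reciprocal_sum_ge_two:
  fixes u :: real
  assumes "u > 0"
  shows "u + 1 / u \<ge> 2"
proof -
  have "0 \<le> (u - 1)\<^sup>2 / u"
    using assms by simp
  also have "(u - 1)\<^sup>2 / u = u + 1 / u - 2"
    using assms by (simp add: field_simps power2_eq_square)
  finally show ?thesis by simp
qed

lemma arith_geo_mean_sqrt_eq_iff:
  fixes x y :: real
  assumes "x \<ge> 0" and "y \<ge> 0"
  shows "2 * sqrt (x * y) = x + y \<longleftrightarrow> x = y"
proof
  assume eq: "2 * sqrt (x * y) = x + y"
  have "(x + y)\<^sup>2 = (2 * sqrt (x * y))\<^sup>2"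
    by (simp add: eq)
  also have "\<dots> = 4 * (x * y)"
    using assms by (simp add: power_mult_distrib)
  finally have "(x - y)\<^sup>2 = 0"
    by (simp add: power2_eq_square algebra_simps)
  thus "x = y" by simp
next
  assume "x = y"
  thus "2 * sqrt (x * y) = x + y"
    using assms by (simp flip: power2_eq_square)
qed

lemma cost_lower_bound:
  fixes D t \<gamma> :: real
  assumes "D \<ge> 0" and "t \<ge> 0" and "\<gamma> \<ge> 9"
  shows "5 * D + t + 2 * sqrt (2 * D * (2 * D + t)) \<le> \<gamma> * D + r2 \<gamma> * t"
proof -
  define u where "u = r2 \<gamma> - 1"
  have u_pos: "u > 0" and \<gamma>_eq: "\<gamma> = 5 + 2 * (u + 1 / u)" and r2_eq: "r2 \<gamma> = 1 + u"
    using r2_reciprocal_sum_form[OF assms(3)] by (simp_all add: u_def)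
  have cost: "\<gamma> * D + r2 \<gamma> * t = 5 * D + t + (2 * D / u + (2 * D + t) * u)"
    unfolding r2_eq by (subst \<gamma>_eq) (simp add: algebra_simps add_divide_distrib)
  have "sqrt (2 * D / u * ((2 * D + t) * u)) \<le> (2 * D / u + (2 * D + t) * u) / 2"
    using assms u_pos by (intro arith_geo_mean_sqrt) auto
  moreover have "2 * D / u * ((2 * D + t) * u) = 2 * D * (2 * D + t)"
    using u_pos by simp
  ultimately show ?thesis
    unfolding cost by simp
qed

lemma cost_at_optimum:
  fixes D t :: real
  defines "s \<equiv> sqrt (2 * D * (2 * D + t))"
  defines "\<gamma> \<equiv> 5 + 2 * (4 * D + t) / s"
  assumes "D > 0" and "t \<ge> 0"
  shows "\<gamma> \<ge> 9" and "r2 \<gamma> = 1 + 2 * D / s" and "\<gamma> * D + r2 \<gamma> * t = 5 * D + t + 2 * s"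
proof -
  have s_sq: "s\<^sup>2 = 2 * D * (2 * D + t)" and s_pos: "s > 0"
    using assms(3,4) by (simp_all add: s_def)
  define u where "u = 2 * D / s"
  have "2 * D \<le> s"
    unfolding s_def using assms(3,4) by (intro real_le_rsqrt) (simp add: power2_eq_square)
  hence u_pos: "0 < u" and u_le: "u \<le> 1"
    using assms(3) s_pos by (simp_all add: u_def)
  have "u + 1 / u = (4 * D + t) / s"
    using assms(3) s_pos s_sq by (simp add: u_def field_simps power2_eq_square)
  hence \<gamma>_eq: "\<gamma> = 5 + 2 * (u + 1 / u)"
    by (simp add: \<gamma>_def)
  show "\<gamma> \<ge> 9"
    using reciprocal_sum_ge_two[OF u_pos] by (simp add: \<gamma>_eq)
  show r2_\<gamma>: "r2 \<gamma> = 1 + 2 * D / s"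
    using r2_at_reciprocal_sum[OF u_pos u_le] by (simp add: \<gamma>_eq u_def)
  have "\<gamma> * D + r2 \<gamma> * t = 5 * D + t + 2 * (2 * D * (2 * D + t)) / s"
    unfolding r2_\<gamma> using s_pos by (simp add: \<gamma>_def field_simps)
  also have "\<dots> = 5 * D + t + 2 * s"
    using s_pos by (simp add: s_sq[symmetric] power2_eq_square)
  finally show "\<gamma> * D + r2 \<gamma> * t = 5 * D + t + 2 * s" .
qed

theorem mainTheorem5:
  fixes D t :: real
  assumes "D > 0" and "t \<ge> 0"
  shows "(\<exists>\<gamma>\<ge>9. \<gamma> * D + r2 \<gamma> * t = 5 * D + t + 2 * sqrt (2 * D * (2 * D + t)))
       \<and> (\<forall>\<gamma>\<ge>9. 5 * D + t + 2 * sqrt (2 * D * (2 * D + t)) \<le> \<gamma> * D + r2 \<gamma> * t)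
       \<and> (t > 0 \<longrightarrow>
           (let g = 5 + 2 * (4 * D + t) / sqrt (2 * D * (2 * D + t)) in
              g \<ge> 9
            \<and> g * D + r2 g * t = 5 * D + t + 2 * sqrt (2 * D * (2 * D + t))
            \<and> (\<forall>i::nat. (r2 g ^ i - 1) * t / 2
                   = ((1 + 2 * D / sqrt (2 * D * (2 * D + t))) ^ i - 1) * t / 2)))
       \<and> 5 * D + t + 2 * sqrt (2 * D * (2 * D + t)) \<le> 9 * D + 2 * t
       \<and> (5 * D + t + 2 * sqrt (2 * D * (2 * D + t)) = 9 * D + 2 * t \<longleftrightarrow> t = 0)"
proof -
  note optimum = cost_at_optimum[OF assms]
  have attained: "\<exists>\<gamma>\<ge>9. \<gamma> * D + r2 \<gamma> * t = 5 * D + t + 2 * sqrt (2 * D * (2 * D + t))"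
    using optimum(1,3) by blast
  have lower: "\<forall>\<gamma>\<ge>9. 5 * D + t + 2 * sqrt (2 * D * (2 * D + t)) \<le> \<gamma> * D + r2 \<gamma> * t"
    using cost_lower_bound assms by auto
  have below_nine: "2 * sqrt (2 * D * (2 * D + t)) \<le> 4 * D + t"
    using arith_geo_mean_sqrt[of "2 * D" "2 * D + t"] assms by simp
  have equal_nine: "2 * sqrt (2 * D * (2 * D + t)) = 4 * D + t \<longleftrightarrow> t = 0"
    using arith_geo_mean_sqrt_eq_iff[of "2 * D" "2 * D + t"] assms by simp
  show ?thesis
    using attained optimum lower below_nine equal_nine unfolding Let_def by auto
qed

end
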